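(* For positive integers $a,b$ define $$c_l(a,a+1;b)=1+\frac{1}{a+2[b,a+1,b]},\quad c_r(a,a+1;b)=1+\frac{1}{a+2[b+1,a]},$$ $$c_l(a;b,b+1)=1+\frac{1}{b+2[a,b+1,a]},\quad c_r(a;b,b+1)=1+\frac{1}{b+2[a+1,b]}.$$ Then for every integer $a\ge1$, $$c_l(a,a+1;2a+1)>c_r(a;2a+1,2a+2)^2,$$ and for every integer $a\ge2$, $$c_r(a,a+1;2a)<c_l(a;2a,2a+1)^2.$$
   Context: $[x_1,\ldots,x_k]$ denotes the finite continued fraction $\cfrac{1}{x_1+\cfrac{1}{\ddots+\cfrac1{x_k}}}$. (In the paper these inequalities are the defining conditions for the $(1,2)$-variations $((a\to a+1),(2a+2\to2a+1),(2a+2\to2a+1))$ and $((a+1\to a),(2a\to2a+1),(2a\to2a+1))$ to be "absolutely increasing".) *)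

theory Defs
  imports Complex_Main
begin

text \<open>Finite continued fraction [x1,...,xk] = 1/(x1 + 1/(... + 1/xk)).
  The empty list is never used; it is given the value 0, so that
  cf (x # xs) = 1/(x + cf xs) holds uniformly.\<close>
fun cf :: "real list \<Rightarrow> real" where
  "cf [] = 0"
| "cf (x # xs) = 1 / (x + cf xs)"

definition cl_left :: "real \<Rightarrow> real \<Rightarrow> real" where
  "cl_left a b = 1 + 1 / (a + 2 * cf [b, a + 1, b])"

definition cr_left :: "real \<Rightarrow> real \<Rightarrow> real" where
  "cr_left a b = 1 + 1 / (a + 2 * cf [b + 1, a])"

definition cl_right :: "real \<Rightarrow> real \<Rightarrow> real" where
  "cl_right a b = 1 + 1 / (b + 2 * cf [a, b + 1, a])"

definition cr_right :: "real \<Rightarrow> real \<Rightarrow> real" where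
  "cr_right a b = 1 + 1 / (b + 2 * cf [a + 1, b])"

end

theory Submission
  imports Defs
begin

text \<open>All four constants are explicit rational functions of \<open>a\<close> and \<open>b\<close>, and
  comparing \<open>1 + p/q\<close> with \<open>(1 + r/s)\<^sup>2\<close> amounts to comparing \<open>p s\<^sup>2\<close> with
  \<open>q r (r + 2s)\<close>. After substituting \<open>b\<close> and shifting \<open>a = t + 1\<close> (resp. \<open>a = t + 2\<close>),
  the difference becomes a polynomial in \<open>t\<close> with only positive coefficients.\<close>

lemma cf_pair: "y \<noteq> 0 \<Longrightarrow> x*y + 1 \<noteq> 0 \<Longrightarrow> cf [x, y] = y / (x*y + 1)"
  by (simp add: field_simps)

lemma cf_palindrome3:
  assumes "y \<noteq> 0" "x*y + 1 \<noteq> 0" "x*y + 2 \<noteq> 0"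
  shows "cf [y, x, y] = (x*y + 1) / (y * (x*y + 2))"
  using assms by (simp add: field_simps)

lemma cl_right_eq_cl_left: "cl_right a b = cl_left b a"
  by (simp add: cl_left_def cl_right_def)

lemma cr_left_eq_cr_right: "cr_left a b = cr_right b a"
  by (simp add: cr_left_def cr_right_def)

lemma cr_right_closed_form:
  assumes "a > 0" "b > 0"
  shows "cr_right a b = 1 + ((a+1)*b + 1) / (b * ((a+1)*b + 3))"
proof -
  have "(a+1)*b + 1 > 0" using assms by (simp add: add_pos_pos)
  then show ?thesis
    using assms by (simp add: cr_right_def cf_pair field_simps)
qed

lemma cl_left_closed_form:
  assumes "a > 0" "b > 0"
  shows "cl_left a b = 1 + b*((a+1)*b + 2) / (a*b*((a+1)*b + 2) + 2*((a+1)*b + 1))"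
proof -
  have "(a+1)*b + 1 > 0" "b * ((a+1)*b + 2) > 0" using assms by (simp_all add: add_pos_pos)
  then show ?thesis
    using assms by (simp add: cl_left_def cf_palindrome3 field_simps)
qed

lemma one_plus_frac_less_square_iff:
  fixes p q r s :: real
  assumes "q > 0" "s > 0"
  shows "1 + p/q < (1 + r/s)^2 \<longleftrightarrow> p * s^2 < q * (r * (r + 2*s))"
  using assms by (simp add: field_simps power2_eq_square)

lemma square_one_plus_frac_less_iff:
  fixes p q r s :: real
  assumes "q > 0" "s > 0"
  shows "(1 + r/s)^2 < 1 + p/q \<longleftrightarrow> q * (r * (r + 2*s)) < p * s^2"
  using assms by (simp add: field_simps power2_eq_square)

lemma cr_right_sq_less_cl_left:
  fixes a :: real
  assumes "a \<ge> 1"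
  shows "(cr_right a (2*a + 1))^2 < cl_left a (2*a + 1)"
proof -
  obtain t where t: "t \<ge> 0" and a: "a = t + 1"
    using assms by (metis add.commute diff_add_cancel diff_ge_0_iff_ge)
  define p q r s where "p = 24 + 37*t + 20*t^2 + 4*t^3"
    and "q = 38 + 75*t + 61*t^2 + 24*t^3 + 4*t^4"
    and "r = 7 + 7*t + 2*t^2" and "s = 27 + 39*t + 20*t^2 + 4*t^3"
  have cl_left: "cl_left a (2*a + 1) = 1 + p/q"
    using t by (simp add: cl_left_closed_form a p_def q_def algebra_simps power2_eq_square
        power3_eq_cube power4_eq_xxxx)
  have cr_right: "cr_right a (2*a + 1) = 1 + r/s"
    using t by (simp add: cr_right_closed_form a r_def s_def algebra_simps power2_eq_square
        power3_eq_cube)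
  have "p * s^2 - q * (r * (r + 2*s)) =
      1270 + 6656*t + 13811*t^2 + 15722*t^3 + 11017*t^4 + 4928*t^5 + 1384*t^6 + 224*t^7 + 16*t^8"
    by (simp add: p_def q_def r_def s_def algebra_simps power2_eq_square power3_eq_cube
        power4_eq_xxxx power_numeral_reduce)
  also have "\<dots> > 0" using t by (simp add: add_pos_nonneg)
  finally have "q * (r * (r + 2*s)) < p * s^2" by simp
  moreover have "q > 0" "s > 0" using t by (simp_all add: q_def s_def add_pos_nonneg)
  ultimately show ?thesis
    by (simp add: cl_left cr_right square_one_plus_frac_less_iff)
qed

lemma cr_left_less_cl_right_sq:
  fixes a :: real
  assumes "a \<ge> 2"
  shows "cr_left a (2*a) < (cl_right a (2*a))^2"
proof -
  obtain t where t: "t \<ge> 0" and a: "a = t + 2"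
    using assms by (metis add.commute diff_add_cancel diff_ge_0_iff_ge)
  define p q r s where "p = 11 + 9*t + 2*t^2" and "q = 26 + 31*t + 13*t^2 + 2*t^3"
    and "r = 24 + 30*t + 13*t^2 + 2*t^3" and "s = 118 + 186*t + 116*t^2 + 34*t^3 + 4*t^4"
  have cr_left: "cr_left a (2*a) = 1 + p/q"
    using t by (simp add: cr_left_eq_cr_right cr_right_closed_form a p_def q_def algebra_simps
        power2_eq_square power3_eq_cube)
  have cl_right: "cl_right a (2*a) = 1 + r/s"
    using t by (simp add: cl_right_eq_cl_left cl_left_closed_form a r_def s_def algebra_simps
        power2_eq_square power3_eq_cube power4_eq_xxxx)
  have "q * (r * (r + 2*s)) - p * s^2 =
      9076 + 38916*t + 71724*t^2 + 75924*t^3 + 51362*t^4 + 23159*t^5 + 6985*t^6 + 1362*t^7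
      + 156*t^8 + 8*t^9"
    by (simp add: p_def q_def r_def s_def algebra_simps power2_eq_square power3_eq_cube
        power4_eq_xxxx power_numeral_reduce)
  also have "\<dots> > 0" using t by (simp add: add_pos_nonneg)
  finally have "p * s^2 < q * (r * (r + 2*s))" by simp
  moreover have "q > 0" "s > 0" using t by (simp_all add: q_def s_def add_pos_nonneg)
  ultimately show ?thesis
    by (simp add: cr_left cl_right one_plus_frac_less_square_iff)
qed

theorem lemma13:
  shows "(\<forall>a::nat. a \<ge> 1 \<longrightarrow>
           cl_left (real a) (real (2*a+1)) > (cr_right (real a) (real (2*a+1)))\<^sup>2)
       \<and> (\<forall>a::nat. a \<ge> 2 \<longrightarrow>
           cr_left (real a) (real (2*a)) < (cl_right (real a) (real (2*a)))\<^sup>2)"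
proof safe
  fix a :: nat
  assume "a \<ge> 1"
  then show "cl_left (real a) (real (2*a+1)) > (cr_right (real a) (real (2*a+1)))\<^sup>2"
    using cr_right_sq_less_cl_left[of "real a"] by (simp add: add.commute)
next
  fix a :: nat
  assume "a \<ge> 2"
  then show "cr_left (real a) (real (2*a)) < (cl_right (real a) (real (2*a)))\<^sup>2"
    using cr_left_less_cl_right_sq[of "real a"] by simp
qed

end
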